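(* Assume the reduced model family $(V_k)_{k=1,\dots,K}$ is $(\varepsilon,\mu)$-admissible for some $\varepsilon>0$ and $\mu\ge1$. Let $u\in V$ satisfy $\operatorname{dist}(u,\mathcal M)\le\varepsilon_{model}$. Let the observation be $w=P_Wu+\eta$ with $\eta\in W$ and $\|\eta\|\le\varepsilon_{noise}$. Then the estimator obtained by surrogate model selection satisfies $$\|u-u^*(w)\|\le\delta_{\kappa\rho}+\varepsilon_{noise},\qquad \rho:=\mu(\varepsilon+\varepsilon_{noise})+(\mu+1)\varepsilon_{model},\quad\kappa=R/r.$$ For the idealized selection (minimizing $\operatorname{dist}(u_k^*(w),\mathcal M)$), the same bound holds with $\kappa=1$.
   Context: Let $V$ be a real Hilbert space with norm $\|\cdot\|$. Let $Y\subset\mathbb R^d$ be compact and let $y\mapsto u(y)$ be a continuous map from $Y$ to $V$. Set $\mathcal M=\{u(y):y\in Y\}$, which is compact. Let $W\subset V$ be a linear subspace of finite dimension $m$, let $P_W$ be the orthogonal projection onto $W$, and let $W^\perp$ be its orthogonal complement. For $w\in W$ put $V_w=w+W^\perp$. For $\sigma\ge 0$ define - $\mathcal M_\sigma=\{v\in V:\operatorname{dist}(v,\mathcal M)\le\sigma\}$; - $\delta_\sigma=\sup\{\|u-v\|: u,v\in\mathcal M_\sigma,\ u-v\in W^\perp\}$. For a finite-dimensional subspace $E\subset V$ let $\mu(E,W)=\sup_{v\in E\setminus\{0\}}\|v\|/\|P_Wv\|$, with the conventions $\mu(\{0\},W)=1$ and $\mu(E,W)=+\infty$ if $E\cap W^\perp\ne\{0\}$.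 A reduced model family consists of: - sets $\mathcal M_1,\dots,\mathcal M_K$ with $\mathcal M=\bigcup_{k=1}^K\mathcal M_k$; - affine spaces $V_k=\bar u_k+\bar V_k$, where $\bar u_k\in V$ and $\bar V_k$ is a linear subspace of dimension $n_k\le m$; - numbers $\varepsilon_k\ge\sup_{u\in\mathcal M_k}\operatorname{dist}(u,V_k)$; - constants $\mu_k=\mu(\bar V_k,W)<\infty$. The family is $(\varepsilon,\mu)$-admissible if $\varepsilon_k\le\varepsilon$ and $\mu_k\le\mu$ for all $k$. For $w\in W$ the PBDW estimators are $u_k^*(w)=\operatorname{argmin}\{\operatorname{dist}(v,V_k): v\in V_w\}$, $k=1,\dots,K$ (the minimizer is unique). A surrogate is a function $\mathcal S(\cdot,\mathcal M):V\to[0,\infty)$ with $r\operatorname{dist}(v,\mathcal M)\le\mathcal S(v,\mathcal M)\le R\operatorname{dist}(v,\mathcal M)$ for all $v\in V$, where $0<r\le R$ are constants; set $\kappa=R/r$. Surrogate model selection picks $k^*(w)$ as any minimizer of $k\mapsto\mathcal S(u_k^*(w),\mathcal M)$ over $\{1,\dots,K\}$ and sets $u^*(w)=u^*_{k^*(w)}(w)$. *)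

theory Defs
  imports "HOL-Analysis.Analysis"
begin

definition fin_dim_subspace :: "'v::real_vector set \<Rightarrow> bool" where
  "fin_dim_subspace E \<longleftrightarrow> subspace E \<and> (\<exists>B. finite B \<and> span B = E)"

definition orth_proj :: "'v::real_inner set \<Rightarrow> 'v \<Rightarrow> 'v" where
  "orth_proj W v = (THE p. p \<in> W \<and> (\<forall>x\<in>W. inner (v - p) x = 0))"

definition affine_fiber :: "'v::real_inner set \<Rightarrow> 'v \<Rightarrow> 'v set" where
  "affine_fiber W w = (\<lambda>z. w + z) ` (orthogonal_comp W)"

definition fattening :: "'v::real_normed_vector set \<Rightarrow> real \<Rightarrow> 'v set" where
  "fattening M \<sigma> = {v. infdist v M \<le> \<sigma>}"

definition delta :: "'v::real_inner set \<Rightarrow> 'v set \<Rightarrow> real \<Rightarrow> real" where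
  "delta M W \<sigma> = Sup {norm (u - v) | u v. u \<in> fattening M \<sigma> \<and> v \<in> fattening M \<sigma>
                         \<and> u - v \<in> orthogonal_comp W}"

definition mu_const :: "'v::real_inner set \<Rightarrow> 'v set \<Rightarrow> ereal" where
  "mu_const E W =
     (if E \<inter> orthogonal_comp W \<noteq> {0} then \<infinity>
      else if E = {0} then 1
      else Sup {ereal (norm v / norm (orth_proj W v)) | v. v \<in> E \<and> v \<noteq> 0})"

definition pbdw :: "'v::real_inner set \<Rightarrow> 'v set \<Rightarrow> 'v \<Rightarrow> 'v" where
  "pbdw W Vk w = (THE v. v \<in> affine_fiber W w \<and>
                     (\<forall>v'\<in>affine_fiber W w. infdist v Vk \<le> infdist v' Vk))"

end

theory Submission
  imports Defs
begin

text \<open>For one affine model \<open>V = ub + A\<close> the PBDW estimator is \<open>u\<^sup>*(w) = w + (z - P\<^sub>W z)\<close>,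
  where \<open>z \<in> V\<close> is the point whose measurement \<open>P\<^sub>W z\<close> is closest to \<open>w\<close>; it is unique because
  \<open>\<parallel>a\<parallel> \<le> \<mu> \<parallel>P\<^sub>W a\<parallel>\<close> on \<open>A\<close>. The map \<open>w \<mapsto> u\<^sup>*(w)\<close> is \<open>\<mu>\<close>-Lipschitz and reproduces every \<open>v\<close>
  up to \<open>\<mu> (dist(v, V) + \<parallel>w - P\<^sub>W v\<parallel>)\<close>. Applied to the model containing the point of \<open>\<M>\<close>
  nearest to \<open>u\<close> this gives \<open>dist(u\<^sup>*(w), \<M>) \<le> \<rho>\<close>, so the selected estimator satisfies
  \<open>dist(u\<^sup>*(w), \<M>) \<le> \<kappa> \<rho>\<close>. Then \<open>u + \<eta>\<close> and \<open>u\<^sup>*(w)\<close> both lie in \<open>\<M>\<^sub>\<kappa>\<^sub>\<rho>\<close> and differ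
  by an element of \<open>W\<^sup>\<bottom>\<close>, whence \<open>\<parallel>u + \<eta> - u\<^sup>*(w)\<parallel> \<le> \<delta>\<^sub>\<kappa>\<^sub>\<rho>\<close>.\<close>

section \<open>Orthogonal projection onto finite-dimensional subspaces\<close>

lemma orth_proj_exists:
  fixes E :: "'v::real_inner set"
  assumes "fin_dim_subspace E"
  shows "\<exists>p\<in>E. \<forall>x\<in>E. inner (v - p) x = 0"
proof -
  obtain B where B: "finite B" "span B = E"
    using assms unfolding fin_dim_subspace_def by blast
  obtain C where C: "finite C" "span C = E" "pairwise orthogonal C"
    using basis_orthogonal[OF B(1)] B(2) by metis
  define p where "p = (\<Sum>b\<in>C. (b \<bullet> v / (b \<bullet> b)) *\<^sub>R b)"
  have "orthogonal (v - p) x" if "x \<in> C" for x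
  proof -
    have "v \<bullet> x = (\<Sum>b\<in>C. if b = x then b \<bullet> v else 0)"
      by (simp add: C(1) inner_commute that)
    also have "\<dots> = (\<Sum>b\<in>C. b \<bullet> v * (b \<bullet> x) / (b \<bullet> b))"
      using C(3) that by (intro sum.cong) (auto simp: pairwise_def orthogonal_def)
    finally show ?thesis
      by (simp add: p_def orthogonal_def algebra_simps inner_sum_left)
  qed
  then have "\<forall>x\<in>E. inner (v - p) x = 0"
    using orthogonal_to_span C(2) unfolding orthogonal_def by blast
  moreover have "p \<in> E"
    unfolding p_def C(2)[symmetric] by (intro span_sum span_scale span_base)
  ultimately show ?thesis by blast
qed

lemma orth_proj_unique:
  fixes E :: "'v::real_inner set"
  assumes "subspace E" "p \<in> E" "\<forall>x\<in>E. inner (v - p) x = 0"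
    "q \<in> E" "\<forall>x\<in>E. inner (v - q) x = 0"
  shows "p = q"
proof -
  have "p - q \<in> E" using assms by (simp add: subspace_diff)
  then have "inner (v - q) (p - q) - inner (v - p) (p - q) = 0" using assms by auto
  then have "inner (p - q) (p - q) = 0" by (simp add: algebra_simps inner_diff_left)
  then show ?thesis by simp
qed

lemma
  fixes E :: "'v::real_inner set"
  assumes "fin_dim_subspace E"
  shows orth_proj_mem: "orth_proj E v \<in> E"
    and orth_proj_orthogonal: "\<And>x. x \<in> E \<Longrightarrow> inner (v - orth_proj E v) x = 0"
proof -
  have "\<exists>!p. p \<in> E \<and> (\<forall>x\<in>E. inner (v - p) x = 0)"
    using orth_proj_exists[OF assms] orth_proj_unique assms
    unfolding fin_dim_subspace_def by blast
  from theI'[OF this] show "orth_proj E v \<in> E" "\<And>x. x \<in> E \<Longrightarrow> inner (v - orth_proj E v) x = 0"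
    unfolding orth_proj_def by auto
qed

lemma orth_proj_eqI:
  fixes E :: "'v::real_inner set"
  assumes "fin_dim_subspace E" "p \<in> E" "\<And>x. x \<in> E \<Longrightarrow> inner (v - p) x = 0"
  shows "orth_proj E v = p"
  using orth_proj_unique orth_proj_mem orth_proj_orthogonal assms
  unfolding fin_dim_subspace_def by metis

lemma linear_orth_proj:
  fixes E :: "'v::real_inner set"
  assumes E: "fin_dim_subspace E"
  shows "linear (orth_proj E)"
proof (rule linearI)
  have sE: "subspace E" using E fin_dim_subspace_def by blast
  show "orth_proj E (a + b) = orth_proj E a + orth_proj E b" for a b
    using orth_proj_orthogonal[OF E, where v=a] orth_proj_orthogonal[OF E, where v=b]
    by (intro orth_proj_eqI[OF E] subspace_add[OF sE] orth_proj_mem[OF E])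
       (simp add: algebra_simps inner_diff_left inner_add_left)
  show "orth_proj E (c *\<^sub>R a) = c *\<^sub>R orth_proj E a" for c a
    using orth_proj_orthogonal[OF E, where v=a]
    by (intro orth_proj_eqI[OF E] subspace_scale[OF sE] orth_proj_mem[OF E])
       (simp add: inner_diff_left flip: scaleR_right_diff_distrib)
qed

lemma orth_proj_id:
  fixes E :: "'v::real_inner set"
  assumes "fin_dim_subspace E" "x \<in> E"
  shows "orth_proj E x = x"
  using orth_proj_eqI[OF assms] by simp

lemma orth_proj_orthogonal_comp:
  fixes E :: "'v::real_inner set"
  assumes "fin_dim_subspace E" "x \<in> orthogonal_comp E"
  shows "orth_proj E x = 0"
  using assms fin_dim_subspace_def subspace_0
  by (intro orth_proj_eqI) (auto simp: orthogonal_comp_def orthogonal_def inner_commute)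

lemma orth_proj_residual_in_orthogonal_comp:
  fixes E :: "'v::real_inner set"
  assumes "fin_dim_subspace E"
  shows "v - orth_proj E v \<in> orthogonal_comp E"
  using orth_proj_orthogonal[OF assms]
  by (auto simp: orthogonal_comp_def orthogonal_def inner_commute)

lemma orth_proj_best_approx:
  fixes E :: "'v::real_inner set"
  assumes E: "fin_dim_subspace E" and t: "t \<in> E"
  shows "(norm (v - t))\<^sup>2 = (norm (v - orth_proj E v))\<^sup>2 + (norm (orth_proj E v - t))\<^sup>2"
proof -
  have "orth_proj E v - t \<in> E"
    using E t orth_proj_mem fin_dim_subspace_def subspace_diff by blast
  then have "orthogonal (v - orth_proj E v) (orth_proj E v - t)"
    using orth_proj_orthogonal[OF E] unfolding orthogonal_def by blast
  then show ?thesis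
    using norm_add_Pythagorean by fastforce
qed

lemma orth_proj_Pythagoras:
  fixes E :: "'v::real_inner set"
  assumes "fin_dim_subspace E"
  shows "(norm v)\<^sup>2 = (norm (orth_proj E v))\<^sup>2 + (norm (v - orth_proj E v))\<^sup>2"
proof -
  have "0 \<in> E" using assms by (simp add: fin_dim_subspace_def subspace_0)
  from orth_proj_best_approx[OF assms this, of v] show ?thesis by (simp add: add.commute)
qed

lemma norm_orth_proj_le:
  fixes E :: "'v::real_inner set"
  assumes "fin_dim_subspace E"
  shows "norm (orth_proj E v) \<le> norm v"
proof (rule power2_le_imp_le)
  show "(norm (orth_proj E v))\<^sup>2 \<le> (norm v)\<^sup>2"
    using orth_proj_Pythagoras[OF assms, of v] by simp
qed simp

lemma inner_orth_proj_self:
  fixes E :: "'v::real_inner set"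
  assumes "fin_dim_subspace E"
  shows "inner (orth_proj E v) v = (norm (orth_proj E v))\<^sup>2"
  using orth_proj_orthogonal[OF assms orth_proj_mem[OF assms, of v], where v=v]
  by (simp add: inner_diff_left power2_norm_eq_inner inner_commute[of v])

lemma inner_orth_proj_decomp:
  fixes E :: "'v::real_inner set"
  assumes E: "fin_dim_subspace E"
  shows "inner x z = inner (orth_proj E x) (orth_proj E z)
                     + inner (x - orth_proj E x) (z - orth_proj E z)"
proof -
  have "inner (x - orth_proj E x) (orth_proj E z) = 0"
       "inner (z - orth_proj E z) (orth_proj E x) = 0"
    using orth_proj_orthogonal[OF E orth_proj_mem[OF E]] by blast+
  then show ?thesis
    by (simp add: inner_diff_left inner_diff_right inner_commute)
qed

lemma fin_dim_subspace_linear_image: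
  assumes "linear f" "fin_dim_subspace A"
  shows "fin_dim_subspace (f ` A)"
  using assms linear_subspace_image span_linear_image
  unfolding fin_dim_subspace_def by (metis finite_imageI)


section \<open>Distances, fattenings and inf-sup constants\<close>

lemma le_infdistI:
  assumes "A \<noteq> {}" "\<And>a. a \<in> A \<Longrightarrow> d \<le> dist x a"
  shows "d \<le> infdist x A"
  using assms by (simp add: infdist_notempty cINF_greatest)

lemma infdist_attained_compact:
  fixes M :: "'a::metric_space set"
  assumes "compact M" "M \<noteq> {}"
  obtains m where "m \<in> M" "infdist x M = dist x m"
proof -
  have "continuous_on M (dist x)"
    by (intro continuous_intros)
  then obtain m where m: "m \<in> M" "\<And>y. y \<in> M \<Longrightarrow> dist x m \<le> dist x y"
    using continuous_attains_inf[OF assms] by blast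
  then have "infdist x M = dist x m"
    by (intro order_antisym infdist_le le_infdistI[OF assms(2)])
  with m(1) that show ?thesis by blast
qed

lemma infdist_affine_subspace:
  fixes A :: "'v::real_inner set"
  assumes A: "fin_dim_subspace A"
  shows "infdist v ((+) ub ` A) = dist v (ub + orth_proj A (v - ub))"
proof (rule order_antisym)
  show "infdist v ((+) ub ` A) \<le> dist v (ub + orth_proj A (v - ub))"
    using orth_proj_mem[OF A] by (intro infdist_le) blast
  have "dist v (ub + orth_proj A (v - ub)) \<le> dist v (ub + a)" if "a \<in> A" for a
  proof (rule power2_le_imp_le)
    show "(dist v (ub + orth_proj A (v - ub)))\<^sup>2 \<le> (dist v (ub + a))\<^sup>2"
      using orth_proj_best_approx[OF A that, of "v - ub"] by (simp add: dist_norm diff_diff_eq)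
  qed simp
  moreover have "(+) ub ` A \<noteq> {}"
    using A fin_dim_subspace_def subspace_0 by blast
  ultimately show "dist v (ub + orth_proj A (v - ub)) \<le> infdist v ((+) ub ` A)"
    by (intro le_infdistI) auto
qed

lemma norm_le_delta:
  fixes M W :: "'v::real_inner set"
  assumes M: "compact M" "M \<noteq> {}"
    and ab: "a \<in> fattening M \<sigma>" "b \<in> fattening M \<sigma>" "a - b \<in> orthogonal_comp W"
  shows "norm (a - b) \<le> delta M W \<sigma>"
proof -
  obtain B where B: "\<And>x. x \<in> M \<Longrightarrow> norm x \<le> B"
    using compact_imp_bounded[OF M(1)] bounded_iff by blast
  have bound: "norm x \<le> B + \<sigma>" if "x \<in> fattening M \<sigma>" for x
  proof -
    obtain m where m: "m \<in> M" "infdist x M = dist x m"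
      using infdist_attained_compact[OF M] by blast
    then have "norm x \<le> norm m + \<sigma>"
      using that norm_triangle_ineq2[of x m] by (simp add: fattening_def dist_norm)
    then show ?thesis using B m(1) by force
  qed
  have "bdd_above {norm (u - v) | u v. u \<in> fattening M \<sigma> \<and> v \<in> fattening M \<sigma>
                      \<and> u - v \<in> orthogonal_comp W}"
  proof (rule bdd_aboveI)
    fix t assume "t \<in> {norm (u - v) | u v. u \<in> fattening M \<sigma> \<and> v \<in> fattening M \<sigma>
                                       \<and> u - v \<in> orthogonal_comp W}"
    then obtain u v where t: "t = norm (u - v)"
      and uv: "u \<in> fattening M \<sigma>" "v \<in> fattening M \<sigma>"
      by blast
    show "t \<le> 2 * (B + \<sigma>)"
      using t bound[OF uv(1)] bound[OF uv(2)] norm_triangle_ineq4[of u v] by (smt (verit))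
  qed
  then show ?thesis
    unfolding delta_def using ab by (intro cSup_upper) blast+
qed

lemma mu_const_bound:
  fixes W E :: "'v::real_inner set"
  assumes W: "fin_dim_subspace W" and E: "fin_dim_subspace E"
    and le: "mu_const E W \<le> ereal \<mu>" and a: "a \<in> E"
  shows "norm a \<le> \<mu> * norm (orth_proj W a)"
proof (cases "a = 0")
  case True
  then show ?thesis using linear_0[OF linear_orth_proj[OF W]] by simp
next
  case False
  have cap: "E \<inter> orthogonal_comp W = {0}"
  proof (rule ccontr)
    assume "E \<inter> orthogonal_comp W \<noteq> {0}"
    then have "mu_const E W = \<infinity>" unfolding mu_const_def by simp
    with le show False by simp
  qed
  then have "orth_proj W a \<noteq> 0"
    using a False orth_proj_residual_in_orthogonal_comp[OF W, of a] by force
  moreover have "mu_const E W = Sup {ereal (norm v / norm (orth_proj W v)) | v. v \<in> E \<and> v \<noteq> 0}"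
    using a False cap unfolding mu_const_def by auto
  then have "ereal (norm a / norm (orth_proj W a)) \<le> mu_const E W"
    using a False by (auto intro: Sup_upper)
  then have "norm a / norm (orth_proj W a) \<le> \<mu>"
    using le by (metis ereal_less_eq(3) order_trans)
  ultimately show ?thesis
    by (simp add: divide_le_eq mult.commute)
qed

section \<open>The PBDW estimator of a single affine model\<close>

lemma mem_affine_fiber_iff: "v \<in> affine_fiber W w \<longleftrightarrow> v - w \<in> orthogonal_comp W"
  unfolding affine_fiber_def by (force simp: algebra_simps)

lemma orth_proj_affine_fiber:
  fixes W :: "'v::real_inner set"
  assumes W: "fin_dim_subspace W" and "w \<in> W" "v \<in> affine_fiber W w"
  shows "orth_proj W v = w"
proof -
  have "orth_proj W (v - w) = 0"
    using assms by (simp add: mem_affine_fiber_iff orth_proj_orthogonal_comp)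
  then show ?thesis
    using linear_diff[OF linear_orth_proj[OF W]] orth_proj_id[OF W \<open>w \<in> W\<close>] by simp
qed

locale pbdw_model =
  fixes W A :: "'v::real_inner set" and ub :: 'v and \<mu> :: real
  assumes W: "fin_dim_subspace W" and A: "fin_dim_subspace A"
    and stable: "\<And>a. a \<in> A \<Longrightarrow> norm a \<le> \<mu> * norm (orth_proj W a)"
    and one_le_mu: "1 \<le> \<mu>"
begin

abbreviation P :: "'v \<Rightarrow> 'v" where "P \<equiv> orth_proj W"
abbreviation Q :: "'v \<Rightarrow> 'v" where "Q \<equiv> orth_proj (P ` A)"
abbreviation V :: "'v set" where "V \<equiv> (+) ub ` A"

lemma linear_P: "linear P"
  by (rule linear_orth_proj[OF W])

lemma fin_dim_PA: "fin_dim_subspace (P ` A)"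
  by (rule fin_dim_subspace_linear_image[OF linear_P A])

lemma subspace_A: "subspace A"
  using A fin_dim_subspace_def by blast

lemmas P_add = linear_add[OF linear_P] and P_diff = linear_diff[OF linear_P]
  and Q_diff = linear_diff[OF linear_orth_proj[OF fin_dim_PA]]

lemma inj_on_P: "inj_on P A"
proof (rule inj_onI)
  fix a b assume ab: "a \<in> A" "b \<in> A" "P a = P b"
  then have "norm (a - b) \<le> \<mu> * norm (P (a - b))"
    by (intro stable subspace_diff[OF subspace_A])
  with ab show "a = b" by (simp add: P_diff)
qed

definition lift :: "'v \<Rightarrow> 'v" where
  "lift d = inv_into A P (Q d)"

lemma lift_mem: "lift d \<in> A" and P_lift: "P (lift d) = Q d"
  using orth_proj_mem[OF fin_dim_PA, of d] unfolding lift_def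
  by (auto intro: inv_into_into f_inv_into_f)

lemma lift_eqI: "a \<in> A \<Longrightarrow> P a = Q d \<Longrightarrow> lift d = a"
  unfolding lift_def by (rule inv_into_f_eq[OF inj_on_P])

lemma lift_diff: "lift (d - d') = lift d - lift d'"
  by (intro lift_eqI subspace_diff[OF subspace_A] lift_mem) (simp add: P_diff P_lift Q_diff)

text \<open>\<open>anchor w\<close> is the point \<open>z \<in> V\<close> minimising \<open>\<parallel>w - P z\<parallel>\<close>.\<close>

definition anchor :: "'v \<Rightarrow> 'v" where
  "anchor w = ub + lift (w - P ub)"

definition recover :: "'v \<Rightarrow> 'v" where
  "recover w = w + (anchor w - P (anchor w))"

lemma anchor_mem: "anchor w \<in> V"
  unfolding anchor_def using lift_mem by blast

lemma P_anchor: "P (anchor w) = P ub + Q (w - P ub)"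
  unfolding anchor_def by (simp add: P_add P_lift)

lemma recover_mem_affine_fiber: "recover w \<in> affine_fiber W w"
  unfolding mem_affine_fiber_iff recover_def
  by (simp add: orth_proj_residual_in_orthogonal_comp[OF W])

lemma recover_diff:
  "recover w - recover w' = (w - w') + (lift (w - w') - P (lift (w - w')))"
proof -
  have lift: "lift (w - w') = anchor w - anchor w'"
    using lift_diff[of "w - P ub" "w' - P ub"] by (simp add: anchor_def)
  show ?thesis
    unfolding lift recover_def by (simp add: P_diff algebra_simps)
qed

lemma recover_P_eq: "z \<in> V \<Longrightarrow> recover (P z) = z"
proof -
  assume "z \<in> V"
  then obtain a where a: "a \<in> A" "z = ub + a" by blast
  then have "Q (P a) = P a"
    by (intro orth_proj_id[OF fin_dim_PA]) blast
  then have "lift (P z - P ub) = a"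
    using a by (intro lift_eqI) (simp_all add: P_add)
  then show ?thesis
    using a by (simp add: recover_def anchor_def)
qed


lemma norm_residual_le:
  assumes "a \<in> A"
  shows "(norm (a - P a))\<^sup>2 \<le> (\<mu>\<^sup>2 - 1) * (norm (P a))\<^sup>2"
proof -
  have "(norm a)\<^sup>2 \<le> (\<mu> * norm (P a))\<^sup>2"
    using stable[OF assms] by (intro power_mono) auto
  then show ?thesis
    using orth_proj_Pythagoras[OF W, of a] by (simp add: power_mult_distrib algebra_simps)
qed

lemma norm_recover_diff_le:
  assumes "w \<in> W" "w' \<in> W"
  shows "norm (recover w - recover w') \<le> \<mu> * norm (w - w')"
proof -
  define d where "d = w - w'"
  define y where "y = lift d"
  have "d \<in> W"
    using assms subspace_diff W unfolding d_def fin_dim_subspace_def by blast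
  then have "orthogonal d (y - P y)"
    using orth_proj_residual_in_orthogonal_comp[OF W, of y] unfolding orthogonal_comp_def by blast
  moreover have "recover w - recover w' = d + (y - P y)"
    by (simp add: recover_diff d_def y_def)
  ultimately have "(norm (recover w - recover w'))\<^sup>2 = (norm d)\<^sup>2 + (norm (y - P y))\<^sup>2"
    by (simp add: norm_add_Pythagorean)
  also have "\<dots> \<le> (norm d)\<^sup>2 + (\<mu>\<^sup>2 - 1) * (norm (P y))\<^sup>2"
    using norm_residual_le[OF lift_mem] by (simp add: y_def)
  also have "\<dots> \<le> (norm d)\<^sup>2 + (\<mu>\<^sup>2 - 1) * (norm d)\<^sup>2"
  proof -
    have "norm (P y) \<le> norm d"
      using norm_orth_proj_le[OF fin_dim_PA, of d] by (simp add: y_def P_lift)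
    then have "(norm (P y))\<^sup>2 \<le> (norm d)\<^sup>2"
      by (rule power_mono) simp
    moreover have "0 \<le> \<mu>\<^sup>2 - 1"
      using one_le_mu by (simp add: one_le_power)
    ultimately show ?thesis
      by (simp add: mult_left_mono)
  qed
  also have "\<dots> = (\<mu> * norm (w - w'))\<^sup>2"
    by (simp add: d_def power_mult_distrib algebra_simps)
  finally show ?thesis
    by (rule power2_le_imp_le) (use one_le_mu in simp)
qed

lemma norm_lift_orthogonal_le:
  assumes e: "\<And>a. a \<in> A \<Longrightarrow> inner e a = 0"
  defines "y \<equiv> lift (P e)"
  shows "norm ((e - P e) - (y - P y)) \<le> \<mu> * norm e"
proof -
  define a2 where "a2 = (norm (P y))\<^sup>2"
  define b2 where "b2 = (norm (y - P y))\<^sup>2"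
  define c2 where "c2 = (norm (P e))\<^sup>2"
  define s2 where "s2 = (norm (e - P e))\<^sup>2"
  have nonneg: "0 \<le> a2" "0 \<le> s2"
    by (simp_all add: a2_def s2_def)
  have mu2: "1 \<le> \<mu>\<^sup>2"
    using one_le_mu by (simp add: one_le_power)
  have b2: "b2 \<le> (\<mu>\<^sup>2 - 1) * a2"
    using norm_residual_le[OF lift_mem] by (simp add: a2_def b2_def y_def)
  have Py: "P y = Q (P e)"
    by (simp add: y_def P_lift)
  have a2_c2: "a2 \<le> c2"
    using norm_orth_proj_le[OF fin_dim_PA, of "P e"] by (simp add: a2_def c2_def Py)
  have cross: "inner (e - P e) (y - P y) = - a2"
  proof -
    have "inner (P e) (P y) = a2"
      using inner_orth_proj_self[OF fin_dim_PA, of "P e"] by (simp add: a2_def Py inner_commute)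
    moreover have "inner e y = 0"
      using e lift_mem by (simp add: y_def)
    ultimately show ?thesis
      using inner_orth_proj_decomp[OF W, of e y] by simp
  qed
  have a2_s2: "a2 \<le> (\<mu>\<^sup>2 - 1) * s2"
  proof (cases "a2 = 0")
    case True
    then show ?thesis using mu2 nonneg by simp
  next
    case False
    have "(inner (e - P e) (y - P y))\<^sup>2 \<le> s2 * b2"
      using Cauchy_Schwarz_ineq unfolding s2_def b2_def power2_norm_eq_inner .
    then have "a2 * a2 \<le> s2 * b2"
      by (simp add: cross power2_eq_square)
    also have "\<dots> \<le> ((\<mu>\<^sup>2 - 1) * s2) * a2"
      using mult_left_mono[OF b2 nonneg(2)] by (simp add: mult_ac)
    finally show ?thesis
      using False nonneg by (simp add: mult_le_cancel_right)
  qed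
  have "(norm ((e - P e) - (y - P y)))\<^sup>2 = s2 + b2 + 2 * a2"
    using dot_norm_neg[of "e - P e" "y - P y"] by (simp add: cross s2_def b2_def)
  also have "\<dots> \<le> \<mu>\<^sup>2 * (c2 + s2)"
    using b2 a2_s2 mult_left_mono[OF a2_c2, of "\<mu>\<^sup>2"] zero_le_power2[of \<mu>]
    unfolding left_diff_distrib distrib_left by linarith
  also have "\<dots> = (\<mu> * norm e)\<^sup>2"
    using orth_proj_Pythagoras[OF W, of e] by (simp add: c2_def s2_def power_mult_distrib)
  finally show ?thesis
    by (rule power2_le_imp_le) (use one_le_mu in simp)
qed

lemma norm_recover_P_le: "norm (recover (P v) - v) \<le> \<mu> * infdist v V"
proof -
  define z where "z = ub + orth_proj A (v - ub)"
  define e where "e = v - z"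
  have z: "z \<in> V"
    using orth_proj_mem[OF A] by (auto simp: z_def)
  have e_perp: "inner e a = 0" if "a \<in> A" for a
    using orth_proj_orthogonal[OF A that, where v="v - ub"] by (simp add: e_def z_def diff_diff_eq)
  have "recover (P v) = z + (P e + (lift (P e) - P (lift (P e))))"
    using recover_diff[of "P v" "P z"] recover_P_eq[OF z] by (simp add: e_def P_diff algebra_simps)
  moreover have "v = z + e"
    by (simp add: e_def)
  ultimately have "recover (P v) - v = - ((e - P e) - (lift (P e) - P (lift (P e))))"
    by (simp add: algebra_simps)
  then have "norm (recover (P v) - v) = norm ((e - P e) - (lift (P e) - P (lift (P e))))"
    by (simp only: norm_minus_cancel)
  also have "\<dots> \<le> \<mu> * norm e"
    using norm_lift_orthogonal_le[OF e_perp] by blast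
  also have "norm e = infdist v V"
    using infdist_affine_subspace[OF A] by (simp add: e_def z_def dist_norm)
  finally show ?thesis .
qed

lemma norm_recover_le:
  assumes "w \<in> W"
  shows "norm (recover w - v) \<le> \<mu> * (infdist v V + norm (w - P v))"
proof -
  have "norm (recover w - v) \<le> norm (recover w - recover (P v)) + norm (recover (P v) - v)"
    using norm_triangle_ineq[of "recover w - recover (P v)" "recover (P v) - v"] by simp
  also have "\<dots> \<le> \<mu> * norm (w - P v) + \<mu> * infdist v V"
    using norm_recover_diff_le[OF assms orth_proj_mem[OF W]] norm_recover_P_le by (rule add_mono)
  finally show ?thesis
    by (simp add: algebra_simps)
qed


lemma dist_affine_fiber_decomp:
  assumes w: "w \<in> W" and v: "v \<in> affine_fiber W w" and a: "a \<in> A"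
  shows "(dist v (ub + a))\<^sup>2 = (norm (w - P ub - Q (w - P ub)))\<^sup>2 + (norm (Q (w - P ub) - P a))\<^sup>2
           + (norm (v - (ub + a) - P (v - (ub + a))))\<^sup>2"
proof -
  have "P (v - (ub + a)) = (w - P ub) - P a"
    using orth_proj_affine_fiber[OF W w v] by (simp add: P_diff P_add)
  moreover have "P a \<in> P ` A"
    using a by blast
  ultimately show ?thesis
    using orth_proj_Pythagoras[OF W, of "v - (ub + a)"]
      orth_proj_best_approx[OF fin_dim_PA, of "P a" "w - P ub"]
    by (simp add: dist_norm)
qed

lemma infdist_affine_fiber_ge:
  assumes "w \<in> W" "v \<in> affine_fiber W w"
  shows "norm (w - P ub - Q (w - P ub)) \<le> infdist v V"
proof (rule le_infdistI)
  show "V \<noteq> {}"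
    using anchor_mem by blast
  fix z assume "z \<in> V"
  then obtain a where "a \<in> A" "z = ub + a" by blast
  then have "(norm (w - P ub - Q (w - P ub)))\<^sup>2 \<le> (dist v z)\<^sup>2"
    using dist_affine_fiber_decomp[OF assms] by simp
  then show "norm (w - P ub - Q (w - P ub)) \<le> dist v z"
    by (rule power2_le_imp_le) simp
qed

lemma infdist_recover_le: "infdist (recover w) V \<le> norm (w - P ub - Q (w - P ub))"
  using infdist_le[OF anchor_mem, of "recover w" w]
  by (simp add: recover_def dist_norm P_anchor algebra_simps)

lemma affine_fiber_minimizer_eq_recover:
  assumes w: "w \<in> W" and v: "v \<in> affine_fiber W w"
    and min: "infdist v V \<le> norm (w - P ub - Q (w - P ub))"
  shows "v = recover w"
proof -
  define a where "a = orth_proj A (v - ub)"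
  define x where "x = v - (ub + a)"
  have a: "a \<in> A"
    using orth_proj_mem[OF A] by (simp add: a_def)
  have "dist v (ub + a) \<le> norm (w - P ub - Q (w - P ub))"
    using min infdist_affine_subspace[OF A] by (simp add: a_def)
  then have "(dist v (ub + a))\<^sup>2 \<le> (norm (w - P ub - Q (w - P ub)))\<^sup>2"
    by (rule power_mono) simp
  then have "(norm (Q (w - P ub) - P a))\<^sup>2 + (norm (x - P x))\<^sup>2 \<le> 0"
    using dist_affine_fiber_decomp[OF w v a] by (simp add: x_def)
  then have "P a = Q (w - P ub)" and x: "x = P x"
    by (simp_all add: sum_power2_le_zero_iff)
  then have anchor: "anchor w = ub + a"
    using lift_eqI[OF a] by (simp add: anchor_def)
  then have "v = anchor w + x"
    by (simp add: x_def)
  also have "x = w - P (anchor w)"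
    using x orth_proj_affine_fiber[OF W w v] anchor by (simp add: x_def P_diff)
  finally show ?thesis
    by (simp add: recover_def algebra_simps)
qed

lemma pbdw_eq_recover:
  assumes "w \<in> W"
  shows "pbdw W V w = recover w"
  unfolding pbdw_def
proof (rule the_equality)
  show "recover w \<in> affine_fiber W w
        \<and> (\<forall>v\<in>affine_fiber W w. infdist (recover w) V \<le> infdist v V)"
    using recover_mem_affine_fiber infdist_recover_le infdist_affine_fiber_ge[OF assms]
    by (blast intro: order_trans)
next
  fix v assume "v \<in> affine_fiber W w \<and> (\<forall>v'\<in>affine_fiber W w. infdist v V \<le> infdist v' V)"
  then show "v = recover w"
    using affine_fiber_minimizer_eq_recover[OF assms] recover_mem_affine_fiber infdist_recover_le
    by (blast intro: order_trans)
qed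

lemma pbdw_minus_mem_orthogonal_comp: "w \<in> W \<Longrightarrow> pbdw W V w - w \<in> orthogonal_comp W"
  using recover_mem_affine_fiber by (simp add: pbdw_eq_recover mem_affine_fiber_iff)

lemma norm_pbdw_le:
  "w \<in> W \<Longrightarrow> norm (pbdw W V w - v) \<le> \<mu> * (infdist v V + norm (w - P v))"
  by (simp add: pbdw_eq_recover norm_recover_le)

end

section \<open>Model selection\<close>

lemma surrogate_selection_bound:
  fixes d S :: "'a \<Rightarrow> real"
  assumes r: "0 < r" "r \<le> R" and surrogate: "\<And>v. r * d v \<le> S v \<and> S v \<le> R * d v"
    and selected: "S x \<le> S y" and y: "d y \<le> \<rho>"
  shows "d x \<le> R / r * \<rho>"
proof -
  have "r * d x \<le> R * d y"
    using surrogate[of x] surrogate[of y] selected by linarith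
  also have "\<dots> \<le> R * \<rho>"
    using y r by (simp add: mult_left_mono)
  finally show ?thesis
    using r(1) by (simp add: field_simps)
qed

lemma norm_diff_le_delta:
  fixes M W :: "'v::real_inner set"
  assumes M: "compact M" "M \<noteq> {}" and W: "fin_dim_subspace W"
    and c: "c - (orth_proj W u + \<eta>) \<in> orthogonal_comp W"
    and \<sigma>: "infdist (u + \<eta>) M \<le> \<sigma>" "infdist c M \<le> \<sigma>"
  shows "norm (u - c) \<le> delta M W \<sigma> + norm \<eta>"
proof -
  have "(u + \<eta>) - c = (u - orth_proj W u) - (c - (orth_proj W u + \<eta>))"
    by simp
  then have "(u + \<eta>) - c \<in> orthogonal_comp W"
    using orth_proj_residual_in_orthogonal_comp[OF W, of u] c
    by (metis subspace_diff subspace_orthogonal_comp)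
  then have "norm ((u + \<eta>) - c) \<le> delta M W \<sigma>"
    using norm_le_delta[OF M] \<sigma> by (simp add: fattening_def)
  then show ?thesis
    using norm_triangle_ineq4[of "(u + \<eta>) - c" \<eta>] by simp
qed

theorem theorem3p5:
  fixes Y :: "'y::euclidean_space set"
    and uy :: "'y \<Rightarrow> 'v::{real_inner, complete_space}"
    and W :: "'v set" and m :: nat
    and K :: nat and Mk :: "nat \<Rightarrow> 'v set"
    and ubar :: "nat \<Rightarrow> 'v" and Vbar :: "nat \<Rightarrow> 'v set" and n :: "nat \<Rightarrow> nat"
    and epsk :: "nat \<Rightarrow> real"
    and \<epsilon> \<mu> :: real
    and S :: "'v \<Rightarrow> real" and r R :: real
    and u \<eta> :: 'v and eps_model eps_noise :: real
  assumes Y: "compact Y" "Y \<noteq> {}"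
    and uy_cont: "continuous_on Y uy"
    and W: "fin_dim_subspace W" "dim W = m"
    and K: "K \<ge> 1"
    and M_union: "uy ` Y = (\<Union>k\<in>{1..K}. Mk k)"
    and Vbar: "\<And>k. k \<in> {1..K} \<Longrightarrow> fin_dim_subspace (Vbar k) \<and> dim (Vbar k) = n k \<and> n k \<le> m"
    and epsk: "\<And>k x. k \<in> {1..K} \<Longrightarrow> x \<in> Mk k \<Longrightarrow>
                 infdist x ((\<lambda>z. ubar k + z) ` Vbar k) \<le> epsk k"
    and muk_fin: "\<And>k. k \<in> {1..K} \<Longrightarrow> mu_const (Vbar k) W < \<infinity>"
    and adm: "\<And>k. k \<in> {1..K} \<Longrightarrow> epsk k \<le> \<epsilon> \<and> mu_const (Vbar k) W \<le> ereal \<mu>"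
    and eps_pos: "\<epsilon> > 0" and mu_ge: "\<mu> \<ge> 1"
    and surr: "0 < r" "r \<le> R"
      "\<And>v. r * infdist v (uy ` Y) \<le> S v \<and> S v \<le> R * infdist v (uy ` Y)"
    and u_model: "infdist u (uy ` Y) \<le> eps_model"
    and eta: "\<eta> \<in> W" "norm \<eta> \<le> eps_noise"
  shows "(\<forall>ks\<in>{1..K}.
            (\<forall>j\<in>{1..K}. S (pbdw W ((\<lambda>z. ubar ks + z) ` Vbar ks) (orth_proj W u + \<eta>))
                         \<le> S (pbdw W ((\<lambda>z. ubar j + z) ` Vbar j) (orth_proj W u + \<eta>)))
            \<longrightarrow> norm (u - pbdw W ((\<lambda>z. ubar ks + z) ` Vbar ks) (orth_proj W u + \<eta>))
                  \<le> delta (uy ` Y) W ((R / r) * (\<mu> * (\<epsilon> + eps_noise) + (\<mu> + 1) * eps_model))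
                     + eps_noise)
       \<and> (\<forall>ks\<in>{1..K}.
            (\<forall>j\<in>{1..K}. infdist (pbdw W ((\<lambda>z. ubar ks + z) ` Vbar ks) (orth_proj W u + \<eta>)) (uy ` Y)
                         \<le> infdist (pbdw W ((\<lambda>z. ubar j + z) ` Vbar j) (orth_proj W u + \<eta>)) (uy ` Y))
            \<longrightarrow> norm (u - pbdw W ((\<lambda>z. ubar ks + z) ` Vbar ks) (orth_proj W u + \<eta>))
                  \<le> delta (uy ` Y) W (\<mu> * (\<epsilon> + eps_noise) + (\<mu> + 1) * eps_model)
                     + eps_noise)"
proof -
  define M where "M = uy ` Y"
  define w where "w = orth_proj W u + \<eta>"
  define Vk where "Vk k = (\<lambda>z. ubar k + z) ` Vbar k" for k
  define c where "c k = pbdw W (Vk k) w" for k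
  define \<rho> where "\<rho> = \<mu> * (\<epsilon> + eps_noise) + (\<mu> + 1) * eps_model"
  have M: "compact M" "M \<noteq> {}"
    using compact_continuous_image[OF uy_cont Y(1)] Y(2) by (simp_all add: M_def)
  have w: "w \<in> W"
    using W(1) orth_proj_mem[OF W(1)] eta(1) subspace_add
    unfolding w_def fin_dim_subspace_def by blast
  have model: "pbdw_model W (Vbar k) \<mu>" if "k \<in> {1..K}" for k
    using W(1) Vbar[OF that] adm[OF that] mu_const_bound[OF W(1)] mu_ge
    by (simp add: pbdw_model_def) blast
  obtain k0 where k0: "k0 \<in> {1..K}" "infdist u (Vk k0) \<le> \<epsilon> + eps_model"
  proof -
    obtain m where m: "m \<in> M" "infdist u M = dist u m"
      using infdist_attained_compact[OF M] by blast
    then obtain k where k: "k \<in> {1..K}" "m \<in> Mk k"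
      using M_union by (auto simp: M_def)
    have "infdist u (Vk k) \<le> infdist m (Vk k) + dist u m"
      by (rule infdist_triangle)
    also have "\<dots> \<le> \<epsilon> + eps_model"
      using epsk[OF k] adm[OF k(1)] m(2) u_model by (simp add: Vk_def M_def add_mono)
    finally show thesis
      using that k(1) by blast
  qed
  have best: "infdist (c k0) M \<le> \<rho>"
  proof -
    have "infdist u (Vk k0) + norm (w - orth_proj W u) \<le> (\<epsilon> + eps_model) + eps_noise"
      using k0(2) eta(2) by (simp add: w_def)
    then have "\<mu> * (infdist u (Vk k0) + norm (w - orth_proj W u)) \<le> \<mu> * ((\<epsilon> + eps_model) + eps_noise)"
      by (rule mult_left_mono) (use mu_ge in simp)
    then have "dist (c k0) u \<le> \<mu> * ((\<epsilon> + eps_model) + eps_noise)"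
      using pbdw_model.norm_pbdw_le[OF model[OF k0(1)] w, of "ubar k0" u]
      by (simp add: c_def Vk_def dist_norm)
    then show ?thesis
      using infdist_triangle[of "c k0" M u] u_model
      by (simp add: \<rho>_def M_def algebra_simps)
  qed
  have noise: "infdist (u + \<eta>) M \<le> \<rho>"
  proof -
    have "infdist (u + \<eta>) M \<le> eps_model + eps_noise"
      using infdist_triangle[of "u + \<eta>" M u] u_model eta(2) by (simp add: M_def dist_norm)
    moreover have "eps_noise \<le> \<mu> * eps_noise"
      using mult_right_mono[OF mu_ge, of eps_noise] eta(2) norm_ge_zero[of \<eta>] by simp
    moreover have "0 \<le> eps_model"
      using u_model infdist_nonneg[of u "uy ` Y"] by linarith
    then have "0 \<le> \<mu> * \<epsilon>" "0 \<le> \<mu> * eps_model"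
      using mu_ge eps_pos by simp_all
    ultimately show ?thesis
      unfolding \<rho>_def distrib_left distrib_right by linarith
  qed
  have error: "norm (u - c k) \<le> delta M W \<sigma> + eps_noise"
    if "k \<in> {1..K}" "infdist (c k) M \<le> \<sigma>" "\<rho> \<le> \<sigma>" for k \<sigma>
  proof -
    have "c k - w \<in> orthogonal_comp W"
      using pbdw_model.pbdw_minus_mem_orthogonal_comp[OF model[OF that(1)] w]
      by (simp add: c_def Vk_def)
    then show ?thesis
      using norm_diff_le_delta[OF M W(1) _ _ that(2), of u \<eta>] noise that(3) eta(2)
      by (simp add: w_def)
  qed
  have surrogate: "norm (u - c ks) \<le> delta M W (R / r * \<rho>) + eps_noise"
    if "ks \<in> {1..K}" "\<forall>j\<in>{1..K}. S (c ks) \<le> S (c j)" for ks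
  proof (rule error[OF that(1)])
    show "infdist (c ks) M \<le> R / r * \<rho>"
    proof (rule surrogate_selection_bound[where d="\<lambda>v. infdist v M" and x="c ks", OF surr(1,2) _ _ best])
      show "r * infdist v M \<le> S v \<and> S v \<le> R * infdist v M" for v
        using surr(3) by (simp add: M_def)
      show "S (c ks) \<le> S (c k0)"
        using that(2) k0(1) by blast
    qed
    have "1 * \<rho> \<le> R / r * \<rho>"
      using surr(1,2) noise infdist_nonneg[of "u + \<eta>" M] by (intro mult_right_mono) simp_all
    then show "\<rho> \<le> R / r * \<rho>" by simp
  qed
  have ideal: "norm (u - c ks) \<le> delta M W \<rho> + eps_noise"
    if "ks \<in> {1..K}" "\<forall>j\<in>{1..K}. infdist (c ks) M \<le> infdist (c j) M" for ks
    using error[OF that(1) _ order_refl] that(2) k0(1) best by (meson order_trans)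
  show ?thesis
    unfolding w_def[symmetric] Vk_def[symmetric] c_def[symmetric] M_def[symmetric] \<rho>_def[symmetric]
    using surrogate ideal by blast
qed

end
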